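(* Let $C = c_0c_1\dots c_{m-1}c_0$ and $D=(0)(1)\dots(n-1)(0)$ be reflexive digraph cycles with $D$ non-contractible. For any homomorphism $\phi \in \mathrm{Hom}(C,D)$ and any cutback $P = c_a \dots c_b$ of $C$ (with respect to $\phi$), there is a path of up edges in $\mathrm{Hom}(C,D)$ from $\phi$ to the homomorphism $\phi'$ obtained from $\phi$ by setting $\phi'(c_i) = \phi(c_a)$ for all vertices $c_i$ of $P$ (and $\phi'=\phi$ elsewhere).
   Context: A digraph is a binary relation $\to$ on a finite vertex set; a loop is an arc $uu$; reflexive means every vertex has a loop. A digraph cycle $C=c_0c_1\dots c_{m-1}c_0$ (indices mod $m$, $m\ge3$) has underlying graph the cycle with edges $c_ic_{i+1}$. $D=(0)(1)\dots(n-1)(0)$ has vertex set the integers mod $n$. $D$ is non-contractible if it has length at least $4$ or is a directed $3$-cycle. A homomorphism $\phi:C\to D$ satisfies $u\to v \Rightarrow \phi(u)\to\phi(v)$. $\mathrm{Hom}(C,D)$ is the digraph on homomorphisms with $\phi\to\phi'$ iff $\phi(u)\to\phi'(v)$ for all arcs $u\to v$ of $C$; $\phi,\phi'$ are adjacent if $\phi\to\phi'$ or $\phi'\to\phi$. For adjacent $\phi,\phi'$ (with $C$ reflexive) each vertex $c$ has $\phi'(c)\in\{\phi(c),\phi(c)\pm1\}$; $c$ moves up if $\phi'(c)=\phi(c)+1$ and moves down if $\phi'(c)=\phi(c)-1$. The pair $(\phi,\phi')$ is an up edge if they are adjacent and every vertex that moves, moves up. A path of up edges from $\phi$ to $\phi'$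 is a sequence $\phi=\phi_0,\dots,\phi_k=\phi'$ with each $(\phi_{j},\phi_{j+1})$ an up edge. Under $\phi$, edge $c_ic_{i+1}$ is increasing, stationary or decreasing as $\phi(c_{i+1})-\phi(c_i)$ is $1,0,-1$; the increase of a subpath is its number of increasing edges minus its number of decreasing edges. A subpath $P=c_a\dots c_b$ is a cutback (for $\phi$) if its increase is $0$ and the increase of $c_a\dots c_i$ is negative for all $i\in\{a+1,\dots,b-1\}$. *)

theory Defs
  imports Main
begin

definition refl_dicycle :: "nat \<Rightarrow> (nat \<Rightarrow> nat \<Rightarrow> bool) \<Rightarrow> bool" where
  "refl_dicycle m R \<longleftrightarrow>
     m \<ge> 3 \<and>
     (\<forall>u v. R u v \<longrightarrow> u < m \<and> v < m) \<and>
     (\<forall>u<m. R u u) \<and>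
     (\<forall>u<m. \<forall>v<m. u \<noteq> v \<longrightarrow> R u v \<longrightarrow> v = Suc u mod m \<or> u = Suc v mod m) \<and>
     (\<forall>i<m. R i (Suc i mod m) \<or> R (Suc i mod m) i)"

definition non_contractible :: "nat \<Rightarrow> (nat \<Rightarrow> nat \<Rightarrow> bool) \<Rightarrow> bool" where
  "non_contractible n R \<longleftrightarrow>
     n \<ge> 4 \<or>
     (n = 3 \<and> ((\<forall>i<3. R i (Suc i mod 3) \<and> \<not> R (Suc i mod 3) i) \<or>
                (\<forall>i<3. R (Suc i mod 3) i \<and> \<not> R i (Suc i mod 3))))"

definition is_hom :: "nat \<Rightarrow> (nat \<Rightarrow> nat \<Rightarrow> bool) \<Rightarrow> nat \<Rightarrow> (nat \<Rightarrow> nat \<Rightarrow> bool) \<Rightarrow> (nat \<Rightarrow> nat) \<Rightarrow> bool" where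
  "is_hom m C n D \<phi> \<longleftrightarrow> (\<forall>u<m. \<phi> u < n) \<and> (\<forall>u v. C u v \<longrightarrow> D (\<phi> u) (\<phi> v))"

definition hom_arc :: "(nat \<Rightarrow> nat \<Rightarrow> bool) \<Rightarrow> (nat \<Rightarrow> nat \<Rightarrow> bool) \<Rightarrow> (nat \<Rightarrow> nat) \<Rightarrow> (nat \<Rightarrow> nat) \<Rightarrow> bool" where
  "hom_arc C D \<phi> \<psi> \<longleftrightarrow> (\<forall>u v. C u v \<longrightarrow> D (\<phi> u) (\<psi> v))"

definition up_edge :: "nat \<Rightarrow> (nat \<Rightarrow> nat \<Rightarrow> bool) \<Rightarrow> nat \<Rightarrow> (nat \<Rightarrow> nat \<Rightarrow> bool) \<Rightarrow> (nat \<Rightarrow> nat) \<Rightarrow> (nat \<Rightarrow> nat) \<Rightarrow> bool" where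
  "up_edge m C n D \<phi> \<psi> \<longleftrightarrow>
     is_hom m C n D \<phi> \<and> is_hom m C n D \<psi> \<and>
     (hom_arc C D \<phi> \<psi> \<or> hom_arc C D \<psi> \<phi>) \<and>
     (\<forall>c<m. \<psi> c = \<phi> c \<or> \<psi> c = Suc (\<phi> c) mod n)"

definition up_path :: "nat \<Rightarrow> (nat \<Rightarrow> nat \<Rightarrow> bool) \<Rightarrow> nat \<Rightarrow> (nat \<Rightarrow> nat \<Rightarrow> bool) \<Rightarrow> (nat \<Rightarrow> nat) \<Rightarrow> (nat \<Rightarrow> nat) \<Rightarrow> bool" where
  "up_path m C n D \<phi> \<phi>' \<longleftrightarrow>
     (\<exists>ps. ps \<noteq> [] \<and> hd ps = \<phi> \<and> last ps = \<phi>' \<and>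
           (\<forall>j. Suc j < length ps \<longrightarrow> up_edge m C n D (ps ! j) (ps ! Suc j)))"

definition edge_inc :: "nat \<Rightarrow> nat \<Rightarrow> (nat \<Rightarrow> nat) \<Rightarrow> nat \<Rightarrow> int" where
  "edge_inc m n \<phi> i =
     (if \<phi> (Suc i mod m) = Suc (\<phi> i) mod n then 1
      else if \<phi> i = Suc (\<phi> (Suc i mod m)) mod n then -1 else 0)"

definition increase :: "nat \<Rightarrow> nat \<Rightarrow> (nat \<Rightarrow> nat) \<Rightarrow> nat \<Rightarrow> nat \<Rightarrow> int" where
  "increase m n \<phi> a l = (\<Sum>j<l. edge_inc m n \<phi> ((a + j) mod m))"

text \<open>The subpath c_a ... c_b with b = a + l (mod m), 0 < l < m, is a cutback.\<close>
definition cutback :: "nat \<Rightarrow> nat \<Rightarrow> (nat \<Rightarrow> nat) \<Rightarrow> nat \<Rightarrow> nat \<Rightarrow> bool" where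
  "cutback m n \<phi> a l \<longleftrightarrow>
     a < m \<and> 0 < l \<and> l < m \<and> increase m n \<phi> a l = 0 \<and>
     (\<forall>j. 0 < j \<and> j < l \<longrightarrow> increase m n \<phi> a j < 0)"

definition flatten :: "nat \<Rightarrow> (nat \<Rightarrow> nat) \<Rightarrow> nat \<Rightarrow> nat \<Rightarrow> (nat \<Rightarrow> nat)" where
  "flatten m \<phi> a l = (\<lambda>c. if (\<exists>j\<le>l. c = (a + j) mod m) then \<phi> a else \<phi> c)"

end

theory Submission
  imports Defs
begin

text \<open>Write \<open>h j\<close> for the increase of \<open>c\<^sub>a \<dots> c\<^sub>a\<^sub>+\<^sub>j\<close>; walking along \<open>C\<close>, a homomorphism
  satisfies \<open>\<phi>(c\<^sub>a\<^sub>+\<^sub>j) = \<phi>(c\<^sub>a) + h j\<close> in the cycle \<open>D\<close>. On a cutback \<open>h\<close> vanishes at both ends,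
  is negative inside and, changing by at most one per edge, is at least \<open>-l\<close>. For
  \<open>-l \<le> k \<le> 0\<close> let \<open>\<psi>\<^sub>k\<close> agree with \<open>\<phi>\<close> off the cutback and send \<open>c\<^sub>a\<^sub>+\<^sub>j\<close> to
  \<open>\<phi>(c\<^sub>a) + max (h j) k\<close>. Truncating \<open>h\<close> from below keeps the Lipschitz property and does not
  touch the endpoints, so each \<open>\<psi>\<^sub>k\<close> is a homomorphism; \<open>\<psi>\<^sub>-\<^sub>l = \<phi>\<close> and \<open>\<psi>\<^sub>0\<close> is the
  flattening. Passing from \<open>\<psi>\<^sub>k\<close> to \<open>\<psi>\<^sub>k\<^sub>+\<^sub>1\<close> moves exactly the vertices at height \<open>k\<close>, all up by
  one, and this is an up edge.\<close>

lemma up_path_chain: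
  assumes "\<And>i. i < d \<Longrightarrow> up_edge m C n D (f i) (f (Suc i))"
  shows "up_path m C n D (f 0) (f d)"
  unfolding up_path_def
proof (intro exI[of _ "map f [0..<Suc d]"] conjI allI impI)
  fix j assume "Suc j < length (map f [0..<Suc d])"
  then show "up_edge m C n D (map f [0..<Suc d] ! j) (map f [0..<Suc d] ! Suc j)"
    using assms by (simp del: upt_Suc)
qed (simp_all del: upt_Suc add: hd_map last_map)

lemma refl_dicycle_ge3: "refl_dicycle m R \<Longrightarrow> 3 \<le> m"
  by (simp add: refl_dicycle_def)

lemma refl_dicycle_refl: "refl_dicycle m R \<Longrightarrow> u < m \<Longrightarrow> R u u"
  by (simp add: refl_dicycle_def)

lemma refl_dicycle_edge: "refl_dicycle m R \<Longrightarrow> i < m \<Longrightarrow> R i (Suc i mod m) \<or> R (Suc i mod m) i"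
  by (simp add: refl_dicycle_def)

lemma refl_dicycle_arcD:
  assumes "refl_dicycle m R" and "R u v"
  shows "u < m \<and> v < m \<and> (u = v \<or> v = Suc u mod m \<or> u = Suc v mod m)"
  using assms unfolding refl_dicycle_def by metis

definition cycle_add :: "nat \<Rightarrow> nat \<Rightarrow> int \<Rightarrow> nat" where
  "cycle_add n p t = nat ((int p + t) mod int n)"

lemma cycle_add_lt: "0 < n \<Longrightarrow> cycle_add n p t < n"
  by (simp add: cycle_add_def nat_less_iff)

lemma cycle_add_0: "p < n \<Longrightarrow> cycle_add n p 0 = p"
  by (simp add: cycle_add_def)

lemma cycle_add_add: "0 < n \<Longrightarrow> cycle_add n (cycle_add n p s) t = cycle_add n p (s + t)"
  by (simp add: cycle_add_def mod_add_left_eq add.assoc)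

lemma cycle_add_1: "0 < n \<Longrightarrow> cycle_add n p 1 = Suc p mod n"
  unfolding cycle_add_def by (metis nat_int of_nat_Suc add.commute zmod_int)

lemma cycle_add_plus1: "0 < n \<Longrightarrow> cycle_add n p (t + 1) = Suc (cycle_add n p t) mod n"
  by (simp flip: cycle_add_add add: cycle_add_1)

lemma increase_0 [simp]: "increase m n \<phi> a 0 = 0"
  by (simp add: increase_def)

lemma increase_Suc:
  "increase m n \<phi> a (Suc j) = increase m n \<phi> a j + edge_inc m n \<phi> ((a + j) mod m)"
  by (simp add: increase_def)

lemma increase_Suc_diff: "\<bar>increase m n \<phi> a (Suc j) - increase m n \<phi> a j\<bar> \<le> 1"
  by (simp add: increase_Suc edge_inc_def)

lemma increase_ge: "- int j \<le> increase m n \<phi> a j"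
proof (induction j)
  case (Suc j)
  then show ?case using increase_Suc_diff[of m n \<phi> a j] by linarith
qed simp

lemma hom_step_edge_inc:
  assumes C: "refl_dicycle m C" and D: "refl_dicycle n D" and hom: "is_hom m C n D \<phi>"
    and i: "i < m"
  shows "\<phi> (Suc i mod m) = cycle_add n (\<phi> i) (edge_inc m n \<phi> i)"
proof -
  let ?p = "\<phi> i" and ?q = "\<phi> (Suc i mod m)"
  have n: "0 < n" using refl_dicycle_ge3[OF D] by simp
  have "?p < n" "?q < n" using hom i n by (simp_all add: is_hom_def)
  moreover have "D ?p ?q \<or> D ?q ?p"
    using refl_dicycle_edge[OF C i] hom by (auto simp: is_hom_def)
  ultimately have adj: "?q = ?p \<or> ?q = Suc ?p mod n \<or> ?p = Suc ?q mod n"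
    using refl_dicycle_arcD[OF D] by metis
  consider "?q = Suc ?p mod n" | "?q \<noteq> Suc ?p mod n" "?p = Suc ?q mod n"
    | "?q \<noteq> Suc ?p mod n" "?p \<noteq> Suc ?q mod n" by blast
  then show ?thesis
  proof cases
    case 1
    then show ?thesis by (simp add: edge_inc_def cycle_add_1 n)
  next
    case 2
    then have "cycle_add n ?p (-1) = cycle_add n (cycle_add n ?q 1) (-1)"
      by (simp add: cycle_add_1 n)
    also have "\<dots> = ?q" using \<open>?q < n\<close> by (simp add: cycle_add_add cycle_add_0 n)
    finally show ?thesis using 2 by (simp add: edge_inc_def)
  next
    case 3
    then show ?thesis using adj \<open>?p < n\<close> by (simp add: edge_inc_def cycle_add_0)
  qed
qed

lemma hom_eq_cycle_add_increase:
  assumes C: "refl_dicycle m C" and D: "refl_dicycle n D" and hom: "is_hom m C n D \<phi>"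
    and a: "a < m"
  shows "\<phi> ((a + j) mod m) = cycle_add n (\<phi> a) (increase m n \<phi> a j)"
proof (induction j)
  case 0
  show ?case using a hom by (simp add: cycle_add_0 is_hom_def)
next
  case (Suc j)
  have n: "0 < n" using refl_dicycle_ge3[OF D] by simp
  have "\<phi> ((a + Suc j) mod m) = \<phi> (Suc ((a + j) mod m) mod m)"
    by (simp add: mod_Suc_eq)
  also have "\<dots> = cycle_add n (\<phi> ((a + j) mod m)) (edge_inc m n \<phi> ((a + j) mod m))"
    using hom_step_edge_inc[OF C D hom] refl_dicycle_ge3[OF C] by simp
  finally show ?case using Suc.IH by (simp add: cycle_add_add n increase_Suc)
qed

locale cutback_flattening =
  fixes m n :: nat and C D :: "nat \<Rightarrow> nat \<Rightarrow> bool" and \<phi> :: "nat \<Rightarrow> nat" and a l :: nat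
  assumes C: "refl_dicycle m C" and D: "refl_dicycle n D"
    and hom: "is_hom m C n D \<phi>" and cutback: "cutback m n \<phi> a l"
begin

abbreviation height :: "nat \<Rightarrow> int" where
  "height \<equiv> increase m n \<phi> a"

definition offset :: "nat \<Rightarrow> nat" where
  "offset c = (c + (m - a)) mod m"

definition on_path :: "nat \<Rightarrow> bool" where
  "on_path c \<longleftrightarrow> c < m \<and> offset c \<le> l"

definition interior :: "nat \<Rightarrow> bool" where
  "interior c \<longleftrightarrow> c < m \<and> 0 < offset c \<and> offset c < l"

text \<open>\<open>clip k\<close> is \<open>\<psi>\<^sub>k\<close>.\<close>

definition clip :: "int \<Rightarrow> nat \<Rightarrow> nat" where
  "clip k c = (if on_path c then cycle_add n (\<phi> a) (max (height (offset c)) k) else \<phi> c)"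

definition at_floor :: "int \<Rightarrow> nat \<Rightarrow> bool" where
  "at_floor k c \<longleftrightarrow> on_path c \<and> height (offset c) \<le> k"

lemma m_ge_3: "3 \<le> m"
  using C by (rule refl_dicycle_ge3)

lemma n_pos: "0 < n"
  using refl_dicycle_ge3[OF D] by simp

lemma a_less: "a < m" and l_less: "l < m"
  and height_l: "height l = 0" and height_inside: "0 < j \<Longrightarrow> j < l \<Longrightarrow> height j < 0"
  using cutback by (auto simp: cutback_def)

lemma height_nonpos: "j \<le> l \<Longrightarrow> height j \<le> 0"
  using height_l height_inside[of j] by (cases "j = 0 \<or> j = l") auto

lemma offset_less: "offset c < m"
  using m_ge_3 by (simp add: offset_def)

lemma add_offset: "c < m \<Longrightarrow> (a + offset c) mod m = c"
  using a_less by (simp add: offset_def mod_add_right_eq)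

lemma offset_add:
  assumes "i < m"
  shows "offset ((a + i) mod m) = i"
proof -
  have "offset ((a + i) mod m) = (a + i + (m - a)) mod m"
    unfolding offset_def by (rule mod_add_left_eq)
  also have "a + i + (m - a) = i + m" using a_less by simp
  finally show ?thesis using assms by simp
qed

lemma offset_Suc: "offset (Suc v mod m) = Suc (offset v) mod m"
  by (simp add: offset_def mod_add_left_eq mod_Suc_eq)

lemma phi_eq_height: "c < m \<Longrightarrow> \<phi> c = cycle_add n (\<phi> a) (height (offset c))"
  using hom_eq_cycle_add_increase[OF C D hom a_less, of "offset c"] add_offset by simp

lemma interior_neighbour:
  assumes u: "interior u" and v: "v < m" and adj: "v = Suc u mod m \<or> u = Suc v mod m"
  shows "on_path v \<and> \<bar>height (offset u) - height (offset v)\<bar> \<le> 1"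
  using adj
proof
  assume "v = Suc u mod m"
  then have "offset v = Suc (offset u)"
    using u l_less by (simp add: offset_Suc interior_def)
  then show ?thesis
    using u v increase_Suc_diff[of m n \<phi> a "offset u"] by (simp add: on_path_def interior_def)
next
  assume "u = Suc v mod m"
  then have "offset u = Suc (offset v) mod m" by (simp add: offset_Suc)
  then have "offset u = Suc (offset v)"
    using u offset_less[of v] by (auto simp: interior_def mod_Suc split: if_splits)
  then show ?thesis
    using u v increase_Suc_diff[of m n \<phi> a "offset v"] by (simp add: on_path_def interior_def)
qed

lemma clip_off_interior: "k \<le> 0 \<Longrightarrow> \<not> interior c \<Longrightarrow> clip k c = \<phi> c"
  using height_l phi_eq_height[of c]
  by (auto simp: clip_def on_path_def interior_def max_def)

lemma clip_less: "c < m \<Longrightarrow> clip k c < n"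
  using cycle_add_lt[OF n_pos] hom by (simp add: clip_def is_hom_def)

lemma clip_hom:
  assumes k: "k \<le> 0"
  shows "is_hom m C n D (clip k)"
  unfolding is_hom_def
proof (intro conjI allI impI)
  fix u v assume uv: "C u v"
  then have u: "u < m" and v: "v < m" and adj: "u = v \<or> v = Suc u mod m \<or> u = Suc v mod m"
    using refl_dicycle_arcD[OF C] by blast+
  consider "u = v" | "interior u \<or> interior v" "u \<noteq> v" | "\<not> interior u" "\<not> interior v"
    by blast
  then show "D (clip k u) (clip k v)"
  proof cases
    case 1
    then show ?thesis using refl_dicycle_refl[OF D] clip_less u by simp
  next
    case 2
    let ?hu = "height (offset u)" and ?hv = "height (offset v)"
    have "on_path u \<and> on_path v \<and> \<bar>?hu - ?hv\<bar> \<le> 1"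
      using 2 interior_neighbour[of u v] interior_neighbour[of v u] u v adj
      by (auto simp: on_path_def interior_def)
    then have "clip k u = cycle_add n (\<phi> a) (max ?hu k)"
        "clip k v = cycle_add n (\<phi> a) (max ?hv k)"
      and "max ?hu k = max ?hv k \<or> max ?hu k = ?hu \<and> max ?hv k = ?hv"
      by (auto simp: clip_def)
    moreover have "D (\<phi> u) (\<phi> v)" using hom uv by (simp add: is_hom_def)
    ultimately show ?thesis
      using refl_dicycle_refl[OF D] cycle_add_lt[OF n_pos] phi_eq_height[OF u] phi_eq_height[OF v]
      by auto
  next
    case 3
    then show ?thesis using clip_off_interior k hom uv by (simp add: is_hom_def)
  qed
qed (rule clip_less)

lemma clip_start: "clip (- int l) = \<phi>"
proof
  fix c
  have "on_path c \<Longrightarrow> - int l \<le> height (offset c)"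
    using increase_ge[of "offset c" m n \<phi> a] by (simp add: on_path_def)
  then show "clip (- int l) c = \<phi> c"
    using phi_eq_height by (simp add: clip_def on_path_def)
qed

lemma flatten_eq_on_path: "flatten m \<phi> a l c = (if on_path c then \<phi> a else \<phi> c)"
proof -
  have "(\<exists>j\<le>l. c = (a + j) mod m) \<longleftrightarrow> on_path c"
    using add_offset offset_add l_less m_ge_3 by (force simp: on_path_def)
  then show ?thesis by (simp add: flatten_def)
qed

lemma clip_end: "clip 0 = flatten m \<phi> a l"
  using height_nonpos a_less hom
  by (auto simp: clip_def flatten_eq_on_path on_path_def max_def cycle_add_0 is_hom_def)

lemma at_floor_interior:
  assumes "k < 0" and "at_floor k c"
  shows "interior c"
proof -
  have "height (offset c) < 0" using assms by (simp add: at_floor_def)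
  then have "offset c \<noteq> 0" and "offset c \<noteq> l"
    using height_l by (metis increase_0 less_irrefl)+
  then show ?thesis using assms(2) by (simp add: at_floor_def on_path_def interior_def)
qed

lemma clip_at_floor:
  "at_floor k c \<Longrightarrow> clip k c = cycle_add n (\<phi> a) k \<and> clip (k + 1) c = cycle_add n (\<phi> a) (k + 1)"
  by (simp add: at_floor_def clip_def)

lemma clip_not_at_floor:
  assumes "\<not> at_floor k c"
  shows "clip (k + 1) c = clip k c"
proof -
  have "on_path c \<Longrightarrow> max (height (offset c)) (k + 1) = max (height (offset c)) k"
    using assms by (simp add: at_floor_def max_def)
  then show ?thesis by (simp add: clip_def)
qed

lemma clip_next_to_floor:
  assumes k: "k < 0" and u: "at_floor k u" and v: "\<not> at_floor k v" and uv: "C u v \<or> C v u"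
  shows "clip k v = cycle_add n (\<phi> a) (k + 1)"
proof -
  have "v < m" and adj: "u = v \<or> v = Suc u mod m \<or> u = Suc v mod m"
    using uv refl_dicycle_arcD[OF C] by blast+
  with u v interior_neighbour at_floor_interior[OF k u]
  have "on_path v" and "\<bar>height (offset u) - height (offset v)\<bar> \<le> 1"
    by fastforce+
  moreover have "height (offset u) \<le> k" using u by (simp add: at_floor_def)
  moreover have "k < height (offset v)" using v \<open>on_path v\<close> by (simp add: at_floor_def)
  ultimately have "height (offset v) = k + 1" by linarith
  with \<open>on_path v\<close> show ?thesis by (simp add: clip_def)
qed

text \<open>The vertices at the floor sit at \<open>x\<close> and their neighbours off the floor at \<open>y\<close>, so
  the direction of the arc of \<open>D\<close> between \<open>x\<close> and \<open>y\<close> gives the direction of the arc of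
  \<open>Hom(C,D)\<close> between \<open>clip k\<close> and \<open>clip (k + 1)\<close>.\<close>

lemma clip_step_arcs:
  assumes k: "k < 0" and uv: "C u v"
  defines "x \<equiv> cycle_add n (\<phi> a) k" and "y \<equiv> cycle_add n (\<phi> a) (k + 1)"
  shows "D x y \<Longrightarrow> D (clip k u) (clip (k + 1) v)"
    and "D y x \<Longrightarrow> D (clip (k + 1) u) (clip k v)"
proof -
  have "D (clip k u) (clip k v)"
    using clip_hom k uv by (simp add: is_hom_def)
  moreover have "D y y"
    using refl_dicycle_refl[OF D] cycle_add_lt[OF n_pos] by (simp add: y_def)
  ultimately show "D x y \<Longrightarrow> D (clip k u) (clip (k + 1) v)"
    and "D y x \<Longrightarrow> D (clip (k + 1) u) (clip k v)"
    using clip_at_floor[of k] clip_not_at_floor[of k] clip_next_to_floor[OF k] uv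
    unfolding x_def y_def by (cases "at_floor k u"; cases "at_floor k v"; simp)+
qed

lemma clip_up_edge:
  assumes k: "k < 0"
  shows "up_edge m C n D (clip k) (clip (k + 1))"
  unfolding up_edge_def
proof (intro conjI)
  show "is_hom m C n D (clip k)" "is_hom m C n D (clip (k + 1))"
    using clip_hom k by simp_all
  show "\<forall>c<m. clip (k + 1) c = clip k c \<or> clip (k + 1) c = Suc (clip k c) mod n"
    using clip_at_floor clip_not_at_floor cycle_add_plus1[OF n_pos] by metis
  have "D (cycle_add n (\<phi> a) k) (cycle_add n (\<phi> a) (k + 1))
      \<or> D (cycle_add n (\<phi> a) (k + 1)) (cycle_add n (\<phi> a) k)"
    using refl_dicycle_edge[OF D cycle_add_lt[OF n_pos]] cycle_add_plus1[OF n_pos] by simp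
  then show "hom_arc C D (clip k) (clip (k + 1)) \<or> hom_arc C D (clip (k + 1)) (clip k)"
    using clip_step_arcs[OF k] by (auto simp: hom_arc_def)
qed

lemma up_path_flatten: "up_path m C n D \<phi> (flatten m \<phi> a l)"
proof -
  have "up_edge m C n D (clip (int i - int l)) (clip (int (Suc i) - int l))" if "i < l" for i
    using clip_up_edge[of "int i - int l"] that by (simp add: algebra_simps)
  then have "up_path m C n D (clip (int 0 - int l)) (clip (int l - int l))"
    by (rule up_path_chain[where f = "\<lambda>i. clip (int i - int l)"])
  then show ?thesis using clip_start clip_end by simp
qed

end

theorem lemma2p2:
  fixes m n :: nat and C D :: "nat \<Rightarrow> nat \<Rightarrow> bool" and \<phi> :: "nat \<Rightarrow> nat" and a l :: nat
  assumes "refl_dicycle m C" and "refl_dicycle n D" and "non_contractible n D"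
    and "is_hom m C n D \<phi>" and "cutback m n \<phi> a l"
  shows "up_path m C n D \<phi> (flatten m \<phi> a l)"
proof -
  interpret cutback_flattening m n C D \<phi> a l
    using assms by unfold_locales
  show ?thesis by (rule up_path_flatten)
qed

end
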